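(* Let $\Sigma^*$ be an $n\times n$ positive definite matrix with $\Omega^*=(\Sigma^* )^{-1}$ whose conditional independence structure is a tree $T^*$, let $D^*$ be a diagonal matrix with nonnegative entries, let $a$ be a leaf of $T^*$ with neighbor $b$, and let $c$ satisfy $0<c<D^*_{bb}$. Define $\Sigma^q$ by $\Sigma^q_{aa}=\Sigma^*_{aa}-\frac{1}{\Omega^*_{aa}}$, $\Sigma^q_{bb}=\Sigma^*_{bb}+c$, and $\Sigma^q_{ij}=\Sigma^*_{ij}$ for all other $(i,j)$. Then $\Sigma^q$ is a covariance (positive definite) matrix and its conditional independence structure is the tree obtained from $T^*$ by exchanging the positions of nodes $a$ and $b$.
   Context: For an $n\times n$ positive definite matrix $\Sigma$ with inverse $\Omega$, its conditional independence structure is the graph on $\{1,\dots,n\}$ with an edge $\{i,j\}$ ($i\neq j$) iff $\Omega_{ij}\neq 0$. "Exchanging the positions of $a$ and $b$" means applying to $T^*$ the relabeling of vertices that swaps $a$ and $b$. *)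

theory Defs
  imports "HOL-Analysis.Analysis"
begin

definition pos_def :: "real^'n^'n \<Rightarrow> bool" where
  "pos_def S \<longleftrightarrow> transpose S = S \<and> (\<forall>x. x \<noteq> 0 \<longrightarrow> x \<bullet> (S *v x) > 0)"

definition ci_adj :: "real^'n^'n \<Rightarrow> 'n \<Rightarrow> 'n \<Rightarrow> bool" where
  "ci_adj S i j \<longleftrightarrow> i \<noteq> j \<and> matrix_inv S $ i $ j \<noteq> 0"

definition walk :: "('n \<Rightarrow> 'n \<Rightarrow> bool) \<Rightarrow> 'n list \<Rightarrow> bool" where
  "walk E vs \<longleftrightarrow> vs \<noteq> [] \<and> (\<forall>k. Suc k < length vs \<longrightarrow> E (vs ! k) (vs ! Suc k))"

definition graph_connected :: "('n \<Rightarrow> 'n \<Rightarrow> bool) \<Rightarrow> bool" where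
  "graph_connected E \<longleftrightarrow> (\<forall>u v. \<exists>vs. walk E vs \<and> hd vs = u \<and> last vs = v)"

definition has_cycle :: "('n \<Rightarrow> 'n \<Rightarrow> bool) \<Rightarrow> bool" where
  "has_cycle E \<longleftrightarrow> (\<exists>vs. length vs \<ge> 3 \<and> distinct vs \<and> walk E vs \<and> E (last vs) (hd vs))"

definition is_tree :: "('n \<Rightarrow> 'n \<Rightarrow> bool) \<Rightarrow> bool" where
  "is_tree E \<longleftrightarrow> (\<forall>u v. E u v \<longrightarrow> E v u) \<and> (\<forall>u. \<not> E u u) \<and> graph_connected E \<and> \<not> has_cycle E"

definition swap_ab :: "'n \<Rightarrow> 'n \<Rightarrow> 'n \<Rightarrow> 'n" where
  "swap_ab a b x = (if x = a then b else if x = b then a else x)"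

end

theory Submission
  imports Defs
begin

text \<open>
  Since \<open>a\<close> is a leaf attached to \<open>b\<close>, row \<open>a\<close> of the precision matrix \<open>W = \<Sigma>\<inverse>\<close> is
  supported on \<open>{a, b}\<close>; equivalently, column \<open>a\<close> of \<open>\<Sigma>\<close> is \<open>\<beta>\<close> times column \<open>b\<close> plus
  \<open>e\<^sub>a / W\<^sub>a\<^sub>a\<close>, where \<open>\<beta> = - W\<^sub>a\<^sub>b / W\<^sub>a\<^sub>a\<close>: in distribution \<open>X\<^sub>a = \<beta> X\<^sub>b + \<epsilon>\<close> with independent
  noise of variance \<open>1 / W\<^sub>a\<^sub>a\<close>. Subtracting \<open>1 / W\<^sub>a\<^sub>a\<close> from \<open>\<Sigma>\<^sub>a\<^sub>a\<close> removes that noise, and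
  adding \<open>c\<close> to \<open>\<Sigma>\<^sub>b\<^sub>b\<close> turns \<open>X\<^sub>b\<close> into a noisy copy of the new \<open>X\<^sub>a = \<beta> X\<^sub>b\<close>; so now \<open>b\<close>
  hangs as a leaf from \<open>a\<close>, which inherits the other neighbours of \<open>b\<close>. Concretely, the
  inverse of \<open>\<Sigma>\<^sup>q\<close> is given in closed form and checked entrywise, and positive
  definiteness comes from \<open>x \<bullet> \<Sigma>\<^sup>q x = y \<bullet> \<Sigma> y + c x\<^sub>b\<^sup>2\<close> with \<open>y = x - x\<^sub>a W e\<^sub>a / W\<^sub>a\<^sub>a\<close>,
  where \<open>y = 0\<close> forces \<open>x\<^sub>b \<noteq> 0\<close> because \<open>W\<^sub>a\<^sub>b \<noteq> 0\<close>.
\<close>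

lemma matrix_inv_right:
  fixes A :: "'a::field^'n^'n"
  assumes "invertible A"
  shows "A ** matrix_inv A = mat 1"
  using someI_ex[OF assms[unfolded invertible_def]] by (simp add: matrix_inv_def)

lemma matrix_inv_left:
  fixes A :: "'a::field^'n^'n"
  assumes "invertible A"
  shows "matrix_inv A ** A = mat 1"
  using assms matrix_inv_right matrix_left_right_inverse by blast

lemma matrix_inv_unique:
  fixes A B :: "'a::field^'n^'n"
  assumes "A ** B = mat 1"
  shows "matrix_inv A = B"
proof -
  have "invertible A"
    using assms invertible_right_inverse by blast
  have "matrix_inv A = matrix_inv A ** (A ** B)"
    by (simp add: assms)
  also have "\<dots> = B"
    by (simp add: matrix_mul_assoc matrix_inv_left \<open>invertible A\<close>)
  finally show ?thesis .
qed

lemma transpose_eq_self_entry: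
  assumes "transpose S = S"
  shows "S $ i $ j = S $ j $ i"
  by (metis assms transpose_def vec_lambda_beta)

lemma transpose_matrix_inv_eq_self:
  fixes S :: "'a::field^'n^'n"
  assumes "invertible S" and "transpose S = S"
  shows "transpose (matrix_inv S) = matrix_inv S"
proof (rule matrix_inv_unique[symmetric])
  show "S ** transpose (matrix_inv S) = mat 1"
    by (metis assms matrix_inv_left matrix_transpose_mul transpose_mat)
qed

lemma pos_def_invertible:
  assumes "pos_def S"
  shows "invertible S"
proof -
  have "x = 0" if "S *v x = 0" for x
    using assms that by (force simp: pos_def_def)
  then show ?thesis
    using matrix_left_invertible_ker invertible_left_inverse by blast
qed

lemma pos_def_matrix_inv_diag_pos:
  assumes "pos_def S"
  shows "matrix_inv S $ a $ a > 0"
proof -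
  define u where "u = matrix_inv S *v axis a 1"
  have Su: "S *v u = axis a 1"
    by (simp add: u_def matrix_vector_mul_assoc matrix_inv_right pos_def_invertible assms)
  then have "u \<noteq> 0"
    by (metis axis_eq_0_iff matrix_vector_mult_0_right zero_neq_one)
  then have "u \<bullet> (S *v u) > 0"
    using assms by (simp add: pos_def_def)
  also have "u \<bullet> (S *v u) = matrix_inv S $ a $ a"
    unfolding Su by (simp add: u_def inner_axis matrix_vector_mult_basis column_def)
  finally show ?thesis .
qed

lemma sum_UNIV_remove_two:
  fixes f :: "'n::finite \<Rightarrow> 'a::comm_monoid_add"
  assumes "a \<noteq> b"
  shows "sum f UNIV = f a + f b + sum f (- {a, b})"
proof -
  have "UNIV = insert a (insert b (- {a, b}))" by auto
  then show ?thesis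
    using assms by (simp add: add.assoc) (metis Compl_iff finite insert_iff sum.insert)
qed

lemma inner_mult_vector_commute:
  fixes S :: "real^'n^'n"
  assumes "transpose S = S"
  shows "u \<bullet> (S *v z) = z \<bullet> (S *v u)"
  by (metis assms dot_lmul_matrix inner_commute vector_transpose_matrix)

lemma quadratic_form_rank_one_deflation:
  fixes S :: "real^'n^'n" and a :: 'n
  assumes "invertible S" and "transpose S = S"
  defines "v \<equiv> (1 / matrix_inv S $ a $ a) *\<^sub>R (matrix_inv S *v axis a 1)"
  shows "x \<bullet> (S *v x) - (x $ a)\<^sup>2 / matrix_inv S $ a $ a
       = (x - x $ a *\<^sub>R v) \<bullet> (S *v (x - x $ a *\<^sub>R v))"
proof -
  let ?w = "matrix_inv S $ a $ a"
  have Sv: "S *v v = (1 / ?w) *\<^sub>R axis a 1"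
    by (simp add: v_def matrix_vector_mult_scaleR matrix_vector_mul_assoc matrix_inv_right assms)
  have "v $ a = ?w / ?w"
    by (simp add: v_def matrix_vector_mult_basis column_def)
  then have vSv: "v \<bullet> (S *v v) = ?w / ?w / ?w"
    by (simp add: Sv inner_axis)
  have xSv: "x \<bullet> (S *v v) = x $ a / ?w" and vSx: "v \<bullet> (S *v x) = x $ a / ?w"
    using inner_mult_vector_commute[OF assms(2), of v x] by (simp_all add: Sv inner_axis)
  have "(x - x $ a *\<^sub>R v) \<bullet> (S *v (x - x $ a *\<^sub>R v))
      = x \<bullet> (S *v x) - x $ a * (x \<bullet> (S *v v)) - x $ a * (v \<bullet> (S *v x))
        + (x $ a)\<^sup>2 * (v \<bullet> (S *v v))"
    by (simp add: matrix_vector_mult_diff_distrib matrix_vector_mult_scaleR inner_diff_left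
        inner_diff_right algebra_simps power2_eq_square)
  also have "\<dots> = x \<bullet> (S *v x) - (x $ a)\<^sup>2 / ?w"
    unfolding xSv vSx vSv by (cases "?w = 0") (simp_all add: field_simps power2_eq_square)
  finally show ?thesis ..
qed

definition leaf_exchange :: "real^'n^'n \<Rightarrow> 'n \<Rightarrow> 'n \<Rightarrow> real \<Rightarrow> real^'n^'n" where
  "leaf_exchange S a b c = (\<chi> i j. if i = a \<and> j = a then S $ a $ a - 1 / (matrix_inv S $ a $ a)
                                  else if i = b \<and> j = b then S $ b $ b + c
                                  else S $ i $ j)"

lemma leaf_exchange_mult_vector:
  fixes S :: "real^'n^'n"
  assumes "a \<noteq> b"
  shows "leaf_exchange S a b c *v x
    = S *v x + (c * x $ b) *\<^sub>R axis b 1 - (x $ a / matrix_inv S $ a $ a) *\<^sub>R axis a 1"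
proof -
  have "leaf_exchange S a b c = S + (\<chi> i j. if i = b \<and> j = b then c else 0)
      - (\<chi> i j. if i = a \<and> j = a then 1 / matrix_inv S $ a $ a else 0)"
    using assms by (auto simp: leaf_exchange_def vec_eq_iff)
  moreover have "(\<chi> i j. if i = k \<and> j = k then d else 0) *v x = (d * x $ k) *\<^sub>R axis k 1"
    for k and d :: real
    by (simp add: vec_eq_iff matrix_vector_mult_def axis_def if_distrib[where f="\<lambda>y. y * _"] cong: if_cong)
  ultimately show ?thesis
    by (simp add: matrix_vector_mult_add_rdistrib matrix_vector_mult_diff_rdistrib)
qed

lemma pos_def_leaf_exchange:
  fixes S :: "real^'n^'n"
  assumes S: "pos_def S" and "a \<noteq> b" and "matrix_inv S $ b $ a \<noteq> 0" and "c > 0"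
  shows "pos_def (leaf_exchange S a b c)"
proof -
  let ?w = "matrix_inv S $ a $ a"
  define v where "v = (1 / ?w) *\<^sub>R (matrix_inv S *v axis a 1)"
  have symS: "transpose S = S"
    using S by (simp add: pos_def_def)
  have "transpose (leaf_exchange S a b c) = leaf_exchange S a b c"
    using \<open>a \<noteq> b\<close> transpose_eq_self_entry[OF symS]
    by (auto simp: leaf_exchange_def transpose_def vec_eq_iff)
  moreover have "x \<bullet> (leaf_exchange S a b c *v x) > 0" if "x \<noteq> 0" for x
  proof -
    let ?y = "x - x $ a *\<^sub>R v"
    have quad: "x \<bullet> (leaf_exchange S a b c *v x) = ?y \<bullet> (S *v ?y) + c * (x $ b)\<^sup>2"
      using quadratic_form_rank_one_deflation[OF pos_def_invertible[OF S] symS, of x a]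
      by (simp add: leaf_exchange_mult_vector[OF \<open>a \<noteq> b\<close>] v_def inner_diff_right
          inner_add_right inner_axis power2_eq_square)
    show ?thesis
    proof (cases "?y = 0")
      case False
      then have "?y \<bullet> (S *v ?y) > 0"
        using S by (simp add: pos_def_def)
      then show ?thesis
        unfolding quad using \<open>c > 0\<close> by (simp add: add_pos_nonneg)
    next
      case True
      then have x: "x = x $ a *\<^sub>R v"
        by simp
      with \<open>x \<noteq> 0\<close> have "x $ a \<noteq> 0"
        by auto
      moreover have "x $ b = x $ a * (matrix_inv S $ b $ a / ?w)"
        using arg_cong[OF x, of "\<lambda>y. y $ b"]
        by (simp add: v_def matrix_vector_mult_basis column_def)
      ultimately have "x $ b \<noteq> 0"
        using assms(3) pos_def_matrix_inv_diag_pos[OF S, of a] by simp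
      then show ?thesis
        unfolding quad True using \<open>c > 0\<close> by simp
    qed
  qed
  ultimately show ?thesis
    by (simp add: pos_def_def)
qed

definition leaf_slope :: "real^'n^'n \<Rightarrow> 'n \<Rightarrow> 'n \<Rightarrow> real" where
  "leaf_slope W a b = - W $ a $ b / W $ a $ a"

lemma leaf_covariance_column:
  fixes S W :: "real^'n^'n"
  assumes "W ** S = mat 1" and "transpose S = S" and "a \<noteq> b" and "W $ a $ a \<noteq> 0"
    and leaf: "\<forall>j. j \<noteq> a \<longrightarrow> j \<noteq> b \<longrightarrow> W $ a $ j = 0"
  shows "S $ i $ a = leaf_slope W a b * S $ i $ b + (if i = a then 1 / W $ a $ a else 0)"
proof -
  have "(if a = i then 1 else 0) = (W ** S) $ a $ i"
    using assms(1) by (simp add: mat_def)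
  also have "\<dots> = W $ a $ a * S $ a $ i + W $ a $ b * S $ b $ i"
    using sum_UNIV_remove_two[OF \<open>a \<noteq> b\<close>, of "\<lambda>j. W $ a $ j * S $ j $ i"] leaf
    by (simp add: matrix_matrix_mult_def)
  finally show ?thesis
    using \<open>W $ a $ a \<noteq> 0\<close> transpose_eq_self_entry[OF assms(2)]
    by (simp add: leaf_slope_def field_simps split: if_splits)
qed

definition leaf_exchange_precision :: "real^'n^'n \<Rightarrow> 'n \<Rightarrow> 'n \<Rightarrow> real \<Rightarrow> real^'n^'n" where
  "leaf_exchange_precision W a b c = (\<chi> i j.
      if i = a \<and> j = a then (W $ b $ b - (W $ a $ b)\<^sup>2 / W $ a $ a + 1 / c) / (leaf_slope W a b)\<^sup>2
      else if i = b \<and> j = b then 1 / c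
      else if i \<in> {a, b} \<and> j \<in> {a, b} then - 1 / (c * leaf_slope W a b)
      else if i = b \<or> j = b then 0
      else if i = a then W $ b $ j / leaf_slope W a b
      else if j = a then W $ i $ b / leaf_slope W a b
      else W $ i $ j)"

lemma leaf_exchange_mult_precision:
  fixes S :: "real^'n^'n"
  defines "W \<equiv> matrix_inv S"
  assumes "invertible S" and "transpose S = S" and "a \<noteq> b"
    and "W $ a $ a \<noteq> 0" and "W $ a $ b \<noteq> 0"
    and leaf: "\<forall>j. j \<noteq> a \<longrightarrow> j \<noteq> b \<longrightarrow> W $ a $ j = 0" and "c \<noteq> 0"
  shows "leaf_exchange S a b c ** leaf_exchange_precision W a b c = mat 1"
proof -
  let ?Sq = "leaf_exchange S a b c" and ?Wq = "leaf_exchange_precision W a b c"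
  let ?\<beta> = "leaf_slope W a b" and ?R = "- {a, b}"
  have "?\<beta> \<noteq> 0"
    using assms by (simp add: leaf_slope_def)
  have col_a: "S $ i $ a = ?\<beta> * S $ i $ b + (if i = a then 1 / W $ a $ a else 0)" for i
    using leaf_covariance_column[OF _ \<open>transpose S = S\<close> \<open>a \<noteq> b\<close> \<open>W $ a $ a \<noteq> 0\<close> leaf]
      matrix_inv_left[OF \<open>invertible S\<close>]
    by (simp add: W_def)
  have Sq_a: "?Sq $ i $ a = ?\<beta> * S $ i $ b" for i
    using col_a[of i] \<open>a \<noteq> b\<close> by (cases "i = a") (simp_all add: leaf_exchange_def flip: W_def)
  have Sq_b: "?Sq $ i $ b = S $ i $ b + (if i = b then c else 0)" for i
    using \<open>a \<noteq> b\<close> by (simp add: leaf_exchange_def)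
  have SW_R: "(\<Sum>j\<in>?R. S $ i $ j * W $ j $ k)
      = (if i = k then 1 else 0) - S $ i $ a * W $ a $ k - S $ i $ b * W $ b $ k" for i k
  proof -
    have "(if i = k then 1 else 0) = (S ** W) $ i $ k"
      using matrix_inv_right[OF \<open>invertible S\<close>] by (simp add: W_def mat_def)
    also have "\<dots> = S $ i $ a * W $ a $ k + S $ i $ b * W $ b $ k + (\<Sum>j\<in>?R. S $ i $ j * W $ j $ k)"
      using sum_UNIV_remove_two[OF \<open>a \<noteq> b\<close>] by (simp add: matrix_matrix_mult_def)
    finally show ?thesis
      by simp
  qed
  have "(?Sq ** ?Wq) $ i $ k = mat 1 $ i $ k" for i k
  proof -
    have "(?Sq ** ?Wq) $ i $ k
        = ?Sq $ i $ a * ?Wq $ a $ k + ?Sq $ i $ b * ?Wq $ b $ k + (\<Sum>j\<in>?R. ?Sq $ i $ j * ?Wq $ j $ k)"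
      using sum_UNIV_remove_two[OF \<open>a \<noteq> b\<close>] by (simp add: matrix_matrix_mult_def)
    also have "(\<Sum>j\<in>?R. ?Sq $ i $ j * ?Wq $ j $ k) = (\<Sum>j\<in>?R. S $ i $ j * ?Wq $ j $ k)"
      by (intro sum.cong) (auto simp: leaf_exchange_def)
    finally have entry: "(?Sq ** ?Wq) $ i $ k
        = ?\<beta> * S $ i $ b * ?Wq $ a $ k + (S $ i $ b + (if i = b then c else 0)) * ?Wq $ b $ k
          + (\<Sum>j\<in>?R. S $ i $ j * ?Wq $ j $ k)"
      unfolding Sq_a Sq_b .
    consider "k = a" | "k = b" | "k \<in> ?R"
      by auto
    then show ?thesis
    proof cases
      case 1
      have R_sum: "(\<Sum>j\<in>?R. S $ i $ j * ?Wq $ j $ a) = (\<Sum>j\<in>?R. S $ i $ j * W $ j $ b) / ?\<beta>"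
        using \<open>a \<noteq> b\<close>
        by (auto simp: leaf_exchange_precision_def sum_divide_distrib intro!: sum.cong)
      show ?thesis
        unfolding 1 entry[unfolded 1] R_sum SW_R col_a
        using \<open>a \<noteq> b\<close> \<open>c \<noteq> 0\<close> \<open>W $ a $ a \<noteq> 0\<close> \<open>W $ a $ b \<noteq> 0\<close>
        by (cases "i = a"; cases "i = b")
           (simp_all add: leaf_exchange_precision_def leaf_slope_def mat_def field_simps power2_eq_square)
    next
      case 2
      have R_sum: "(\<Sum>j\<in>?R. S $ i $ j * ?Wq $ j $ b) = 0"
        using \<open>a \<noteq> b\<close> by (auto simp: leaf_exchange_precision_def intro!: sum.neutral)
      show ?thesis
        unfolding 2 entry[unfolded 2] R_sum
        using \<open>a \<noteq> b\<close> \<open>?\<beta> \<noteq> 0\<close> \<open>c \<noteq> 0\<close>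
        by (simp add: leaf_exchange_precision_def mat_def field_simps)
    next
      case 3
      have R_sum: "(\<Sum>j\<in>?R. S $ i $ j * ?Wq $ j $ k) = (\<Sum>j\<in>?R. S $ i $ j * W $ j $ k)"
        using 3 by (auto simp: leaf_exchange_precision_def intro!: sum.cong)
      show ?thesis
        unfolding entry R_sum SW_R
        using 3 leaf \<open>a \<noteq> b\<close> \<open>?\<beta> \<noteq> 0\<close>
        by (simp add: leaf_exchange_precision_def mat_def)
    qed
  qed
  then show ?thesis
    by (simp add: vec_eq_iff)
qed

lemma leaf_exchange_precision_nonzero_iff:
  fixes W :: "real^'n^'n"
  assumes "transpose W = W" and "a \<noteq> b" and "W $ a $ a \<noteq> 0" and "W $ a $ b \<noteq> 0"
    and leaf: "\<forall>j. j \<noteq> a \<longrightarrow> j \<noteq> b \<longrightarrow> W $ a $ j = 0" and "c \<noteq> 0" and "i \<noteq> j"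
  shows "leaf_exchange_precision W a b c $ i $ j \<noteq> 0 \<longleftrightarrow> W $ swap_ab a b i $ swap_ab a b j \<noteq> 0"
  using assms transpose_eq_self_entry[OF assms(1)]
  by (auto simp: leaf_exchange_precision_def swap_ab_def leaf_slope_def)

theorem proposition1:
  fixes Sigma D :: "real^'n^'n" and a b :: 'n and c :: real
  assumes "pos_def Sigma"
    and "is_tree (ci_adj Sigma)"
    and "\<forall>i j. i \<noteq> j \<longrightarrow> D $ i $ j = 0"
    and "\<forall>i. D $ i $ i \<ge> 0"
    and "ci_adj Sigma a b"
    and "\<forall>j. ci_adj Sigma a j \<longrightarrow> j = b"
    and "0 < c" and "c < D $ b $ b"
  shows "pos_def (\<chi> i j. if i = a \<and> j = a then Sigma $ a $ a - 1 / (matrix_inv Sigma $ a $ a)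
                        else if i = b \<and> j = b then Sigma $ b $ b + c
                        else Sigma $ i $ j)
    \<and> (\<forall>i j. ci_adj (\<chi> i j. if i = a \<and> j = a then Sigma $ a $ a - 1 / (matrix_inv Sigma $ a $ a)
                        else if i = b \<and> j = b then Sigma $ b $ b + c
                        else Sigma $ i $ j) i j
             \<longleftrightarrow> ci_adj Sigma (swap_ab a b i) (swap_ab a b j))"
proof -
  let ?W = "matrix_inv Sigma"
  have inv: "invertible Sigma" and sym: "transpose Sigma = Sigma"
    using assms(1) pos_def_invertible by (auto simp: pos_def_def)
  have symW: "transpose ?W = ?W"
    using transpose_matrix_inv_eq_self[OF inv sym] .
  have "a \<noteq> b" and "?W $ a $ b \<noteq> 0"
    using assms(5) by (auto simp: ci_adj_def)
  have leaf: "\<forall>j. j \<noteq> a \<longrightarrow> j \<noteq> b \<longrightarrow> ?W $ a $ j = 0"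
    using assms(6) by (auto simp: ci_adj_def)
  have "?W $ a $ a \<noteq> 0"
    using pos_def_matrix_inv_diag_pos[OF assms(1)] by (metis less_irrefl)
  have "pos_def (leaf_exchange Sigma a b c)"
    using pos_def_leaf_exchange[OF assms(1) \<open>a \<noteq> b\<close> _ \<open>0 < c\<close>] \<open>?W $ a $ b \<noteq> 0\<close>
      transpose_eq_self_entry[OF symW] by metis
  moreover have "matrix_inv (leaf_exchange Sigma a b c) = leaf_exchange_precision ?W a b c"
    using leaf_exchange_mult_precision[OF inv sym \<open>a \<noteq> b\<close> \<open>?W $ a $ a \<noteq> 0\<close> \<open>?W $ a $ b \<noteq> 0\<close> leaf]
      \<open>0 < c\<close> by (simp add: matrix_inv_unique)
  then have "ci_adj (leaf_exchange Sigma a b c) i j \<longleftrightarrow> ci_adj Sigma (swap_ab a b i) (swap_ab a b j)"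
    for i j
    using leaf_exchange_precision_nonzero_iff[OF symW \<open>a \<noteq> b\<close> \<open>?W $ a $ a \<noteq> 0\<close> \<open>?W $ a $ b \<noteq> 0\<close> leaf]
      \<open>0 < c\<close> by (auto simp: ci_adj_def swap_ab_def)
  ultimately show ?thesis
    unfolding leaf_exchange_def by blast
qed

end
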